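(* Let $V=\{1,\dots,n\}$ be a finite set of banks and $E$ a finite set of edges $e$ with source $s(e)\in V$ and target $t(e)\in V$, each carrying a nominal obligation $\ell_e\in[0,\infty)$; let $\iota_v\in[0,\infty)$ be the external assets of bank $v$, $\bar\ell_v=\sum_{e\in E,\,s(e)=v}\ell_e$, and $\pi_e=\ell_e/\bar\ell_{s(e)}$. Form the lattice liability network on the augmented quiver with edge set $E\cup\{e_v^{\mathrm{in}},e_v^{\mathrm{out}}:v\in V\}$ (each $e_v^{\mathrm{in}},e_v^{\mathrm{out}}$ a self-loop at $v$), where $L_v=[0,\infty]$, $\ell_{e_v^{\mathrm{in}}}=\iota_v$, $\ell_{e_v^{\mathrm{out}}}=\infty$, the distributor is $[D_v(x_v)]_e=\pi_e\min\{x_v,\bar\ell_v\}$ for $e\in E$ with $s(e)=v$, $[D_v(x_v)]_{e_v^{\mathrm{in}}}=\iota_v$, $[D_v(x_v)]_{e_v^{\mathrm{out}}}=\max\{0,x_v-\bar\ell_v\}$, the pay-out aggregator $B_v$ sums the components on edges in $E$ out of $v$ and on $e_v^{\mathrm{out}}$ (ignoring $e_v^{\mathrm{in}}$), and the pay-in aggregator is $A_v\big((p_e)_{e\in t^{-1}(v)}\big)=p_{e_v^{\mathrm{in}}}+\sum_{e\in E,\,t(e)=v}p_e$ (ignoring $e_v^{\mathrm{out}}$). Then the clearing sections of this network correspond precisely (one-to-one) to the Eisenberg–Noe clearing payment vectors, i.e. to the vectors $\mathbf{q}\in\prod_{v}[0,\bar\ell_v]$ satisfying $q_v=\min\{\bar\ell_v,\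 \iota_v+\sum_{e\in E,\,t(e)=v}\pi_e\, q_{s(e)}\}$ for all $v\in V$.
   Context: For $\mathbf{x}=(x_v)\in\prod_v[0,\infty]$, the edge payment on an edge $e$ (of the augmented quiver) is $p_e=[D_{s(e)}(x_{s(e)})]_e$, and $\mathbf{x}$ is a clearing section if $x_v=A_v\big((p_e)_{e:\,t(e)=v}\big)$ for every $v$, where the edges into $v$ include the self-loops $e_v^{\mathrm{in}},e_v^{\mathrm{out}}$. The quantities $\pi_e$ are used only for edges whose source has $\bar\ell_{s(e)}>0$. *)

theory Defs
  imports "HOL-Analysis.Analysis" "HOL-Library.FuncSet"
begin

text \<open>Edges of the augmented quiver: original edges, and the two self-loops
  e_v^in and e_v^out at each bank v.\<close>
datatype ('e, 'v) aedge = Orig 'e | EIn 'v | EOut 'v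

definition lbar :: "'e set \<Rightarrow> ('e \<Rightarrow> 'v) \<Rightarrow> ('e \<Rightarrow> real) \<Rightarrow> 'v \<Rightarrow> real" where
  "lbar E s l v = (\<Sum>e\<in>{e\<in>E. s e = v}. l e)"

text \<open>Relative liabilities (only meaningful when lbar of the source is positive).\<close>
definition relpi :: "'e set \<Rightarrow> ('e \<Rightarrow> 'v) \<Rightarrow> ('e \<Rightarrow> real) \<Rightarrow> 'e \<Rightarrow> real" where
  "relpi E s l e = l e / lbar E s l (s e)"

fun asrc :: "('e \<Rightarrow> 'v) \<Rightarrow> ('e, 'v) aedge \<Rightarrow> 'v" where
  "asrc s (Orig e) = s e"
| "asrc s (EIn v) = v"
| "asrc s (EOut v) = v"

text \<open>Distributor D_v : [0,\<infinity>] \<rightarrow> product over edges out of v (edges not out of v get 0).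
  In ennreal, x - c is the truncated difference max{0, x - c}.\<close>
fun distr :: "'e set \<Rightarrow> ('e \<Rightarrow> 'v) \<Rightarrow> ('e \<Rightarrow> real) \<Rightarrow> ('v \<Rightarrow> real)
      \<Rightarrow> 'v \<Rightarrow> ennreal \<Rightarrow> ('e, 'v) aedge \<Rightarrow> ennreal" where
  "distr E s l \<iota> v x (Orig e) =
     (if e \<in> E \<and> s e = v then ennreal (relpi E s l e) * min x (ennreal (lbar E s l v)) else 0)"
| "distr E s l \<iota> v x (EIn w) = (if w = v then ennreal (\<iota> v) else 0)"
| "distr E s l \<iota> v x (EOut w) = (if w = v then x - ennreal (lbar E s l v) else 0)"

definition payin :: "'e set \<Rightarrow> ('e \<Rightarrow> 'v) \<Rightarrow> 'v \<Rightarrow> (('e, 'v) aedge \<Rightarrow> ennreal) \<Rightarrow> ennreal" where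
  "payin E t v p = p (EIn v) + (\<Sum>e\<in>{e\<in>E. t e = v}. p (Orig e))"

text \<open>Pay-out aggregator B_v (ignores e_v^in); part of the network data, not used
  in the clearing condition.\<close>
definition payout :: "'e set \<Rightarrow> ('e \<Rightarrow> 'v) \<Rightarrow> 'v \<Rightarrow> (('e, 'v) aedge \<Rightarrow> ennreal) \<Rightarrow> ennreal" where
  "payout E s v p = p (EOut v) + (\<Sum>e\<in>{e\<in>E. s e = v}. p (Orig e))"

definition edge_payment :: "'e set \<Rightarrow> ('e \<Rightarrow> 'v) \<Rightarrow> ('e \<Rightarrow> real) \<Rightarrow> ('v \<Rightarrow> real)
      \<Rightarrow> ('v \<Rightarrow> ennreal) \<Rightarrow> ('e, 'v) aedge \<Rightarrow> ennreal" where
  "edge_payment E s l \<iota> x e = distr E s l \<iota> (asrc s e) (x (asrc s e)) e"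

definition clearing_sections :: "'v set \<Rightarrow> 'e set \<Rightarrow> ('e \<Rightarrow> 'v) \<Rightarrow> ('e \<Rightarrow> 'v)
      \<Rightarrow> ('e \<Rightarrow> real) \<Rightarrow> ('v \<Rightarrow> real) \<Rightarrow> ('v \<Rightarrow> ennreal) set" where
  "clearing_sections V E s t l \<iota> =
     {x \<in> V \<rightarrow>\<^sub>E (UNIV :: ennreal set).
        \<forall>v\<in>V. x v = payin E t v (edge_payment E s l \<iota> x)}"

definition EN_clearing_vectors :: "'v set \<Rightarrow> 'e set \<Rightarrow> ('e \<Rightarrow> 'v) \<Rightarrow> ('e \<Rightarrow> 'v)
      \<Rightarrow> ('e \<Rightarrow> real) \<Rightarrow> ('v \<Rightarrow> real) \<Rightarrow> ('v \<Rightarrow> real) set" where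
  "EN_clearing_vectors V E s t l \<iota> =
     {q \<in> (\<Pi>\<^sub>E v\<in>V. {0 .. lbar E s l v}).
        \<forall>v\<in>V. q v = min (lbar E s l v)
                 (\<iota> v + (\<Sum>e\<in>{e\<in>E. t e = v}. relpi E s l e * q (s e)))}"

end

theory Submission
  imports Defs
begin

text \<open>A clearing section x records the total assets x_v of every bank, and bank v pays
  min x_v lbar_v to its creditors. Since the pay-in aggregator only sees these capped payments
  and the constant external assets, the clearing condition says x_v = r_v(q), where q is the
  vector of capped payments and r_v(q) = \<iota>_v + \<Sum> \<pi>_e q_{s(e)} is the Eisenberg--Noe inflow.
  Hence q_v = min (r_v(q)) lbar_v, i.e. q is an Eisenberg--Noe clearing vector, and conversely
  every such q determines the section v \<mapsto> r_v(q), whose capped payments are again q.\<close>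

lemma eq_restrict_iff: "x = restrict g A \<longleftrightarrow> x \<in> extensional A \<and> (\<forall>a\<in>A. x a = g a)"
  by (auto simp: extensional_def)

lemma lbar_nonneg: "\<forall>e\<in>E. 0 \<le> l e \<Longrightarrow> 0 \<le> lbar E s l v"
  unfolding lbar_def by (rule sum_nonneg) auto

lemma relpi_nonneg: "\<forall>e\<in>E. 0 \<le> l e \<Longrightarrow> e \<in> E \<Longrightarrow> 0 \<le> relpi E s l e"
  unfolding relpi_def using lbar_nonneg[of E l s "s e"] by auto

definition en_inflow :: "'e set \<Rightarrow> ('e \<Rightarrow> 'v) \<Rightarrow> ('e \<Rightarrow> 'v) \<Rightarrow> ('e \<Rightarrow> real)
      \<Rightarrow> ('v \<Rightarrow> real) \<Rightarrow> ('v \<Rightarrow> real) \<Rightarrow> 'v \<Rightarrow> real" where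
  "en_inflow E s t l \<iota> q v = \<iota> v + (\<Sum>e\<in>{e\<in>E. t e = v}. relpi E s l e * q (s e))"

definition payment_vector :: "'v set \<Rightarrow> 'e set \<Rightarrow> ('e \<Rightarrow> 'v) \<Rightarrow> ('e \<Rightarrow> real)
      \<Rightarrow> ('v \<Rightarrow> ennreal) \<Rightarrow> 'v \<Rightarrow> real" where
  "payment_vector V E s l x = (\<lambda>v\<in>V. enn2real (min (x v) (ennreal (lbar E s l v))))"

lemma en_inflow_nonneg:
  assumes "\<forall>e\<in>E. 0 \<le> l e" and "0 \<le> \<iota> v" and "\<forall>e\<in>E. 0 \<le> q (s e)"
  shows "0 \<le> en_inflow E s t l \<iota> q v"
  unfolding en_inflow_def using assms relpi_nonneg[OF assms(1)]
  by (auto intro!: add_nonneg_nonneg sum_nonneg mult_nonneg_nonneg)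

lemma payment_vector_nonneg: "v \<in> V \<Longrightarrow> 0 \<le> payment_vector V E s l x v"
  unfolding payment_vector_def by simp

lemma payment_vector_ennreal:
  assumes "\<forall>e\<in>E. 0 \<le> l e" and "\<forall>v\<in>V. 0 \<le> r v"
  shows "payment_vector V E s l (\<lambda>v\<in>V. ennreal (r v)) = (\<lambda>v\<in>V. min (r v) (lbar E s l v))"
  unfolding payment_vector_def
  by (rule restrict_ext) (simp add: assms min_ennreal lbar_nonneg)

lemma payin_edge_payment:
  assumes "\<forall>e\<in>E. s e \<in> V" and "\<forall>e\<in>E. 0 \<le> l e" and "0 \<le> \<iota> v"
  shows "payin E t v (edge_payment E s l \<iota> x)
           = ennreal (en_inflow E s t l \<iota> (payment_vector V E s l x) v)"
proof -
  let ?q = "payment_vector V E s l x"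
  have capped: "min (x (s e)) (ennreal (lbar E s l (s e))) = ennreal (?q (s e))" if "e \<in> E" for e
  proof -
    have "min (x (s e)) (ennreal (lbar E s l (s e))) < top"
      by (simp add: min.strict_coboundedI2)
    then show ?thesis
      using assms(1) that by (simp add: payment_vector_def)
  qed
  have summand_nonneg: "0 \<le> relpi E s l e * ?q (s e)" if "e \<in> E" for e
    using that assms(1) by (intro mult_nonneg_nonneg relpi_nonneg[OF assms(2)] payment_vector_nonneg) auto
  have "edge_payment E s l \<iota> x (Orig e) = ennreal (relpi E s l e * ?q (s e))" if "e \<in> E" for e
    using that capped[OF that] relpi_nonneg[where s = s, OF assms(2) that]
    by (simp add: edge_payment_def ennreal_mult')
  then have "(\<Sum>e\<in>{e\<in>E. t e = v}. edge_payment E s l \<iota> x (Orig e))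
               = (\<Sum>e\<in>{e\<in>E. t e = v}. ennreal (relpi E s l e * ?q (s e)))"
    by (intro sum.cong) auto
  also have "\<dots> = ennreal (\<Sum>e\<in>{e\<in>E. t e = v}. relpi E s l e * ?q (s e))"
    using summand_nonneg by (intro sum_ennreal) auto
  finally have "(\<Sum>e\<in>{e\<in>E. t e = v}. edge_payment E s l \<iota> x (Orig e))
               = ennreal (\<Sum>e\<in>{e\<in>E. t e = v}. relpi E s l e * ?q (s e))" .
  moreover have "edge_payment E s l \<iota> x (EIn v) = ennreal (\<iota> v)"
    by (simp add: edge_payment_def)
  moreover have "0 \<le> (\<Sum>e\<in>{e\<in>E. t e = v}. relpi E s l e * ?q (s e))"
    using summand_nonneg by (intro sum_nonneg) auto
  ultimately show ?thesis
    using assms(3) by (simp add: payin_def en_inflow_def)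
qed

lemma clearing_sections_iff:
  assumes "\<forall>e\<in>E. s e \<in> V" and "\<forall>e\<in>E. 0 \<le> l e" and "\<forall>v\<in>V. 0 \<le> \<iota> v"
  shows "x \<in> clearing_sections V E s t l \<iota>
           \<longleftrightarrow> x = (\<lambda>v\<in>V. ennreal (en_inflow E s t l \<iota> (payment_vector V E s l x) v))"
proof -
  have "\<forall>v\<in>V. payin E t v (edge_payment E s l \<iota> x)
                 = ennreal (en_inflow E s t l \<iota> (payment_vector V E s l x) v)"
    using payin_edge_payment[OF assms(1,2)] assms(3) by blast
  then show ?thesis
    unfolding clearing_sections_def eq_restrict_iff PiE_iff by auto
qed

lemma EN_clearing_vectors_iff:
  "q \<in> EN_clearing_vectors V E s t l \<iota>
     \<longleftrightarrow> (\<forall>v\<in>V. 0 \<le> q v) \<and> q = (\<lambda>v\<in>V. min (en_inflow E s t l \<iota> q v) (lbar E s l v))"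
  unfolding EN_clearing_vectors_def eq_restrict_iff PiE_iff en_inflow_def
  by (auto simp: min.commute)

theorem clearing_sections_bij_EN_clearing_vectors:
  assumes "\<forall>e\<in>E. s e \<in> V" and "\<forall>e\<in>E. 0 \<le> l e" and "\<forall>v\<in>V. 0 \<le> \<iota> v"
  shows "bij_betw (payment_vector V E s l)
           (clearing_sections V E s t l \<iota>) (EN_clearing_vectors V E s t l \<iota>)"
proof -
  let ?CS = "clearing_sections V E s t l \<iota>"
  let ?EN = "EN_clearing_vectors V E s t l \<iota>"
  let ?F = "payment_vector V E s l"
  let ?r = "en_inflow E s t l \<iota>"
  let ?G = "\<lambda>q. \<lambda>v\<in>V. ennreal (?r q v)"
  have FG: "?F (?G q) = (\<lambda>v\<in>V. min (?r q v) (lbar E s l v))" if "\<forall>v\<in>V. 0 \<le> q v" for q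
  proof (rule payment_vector_ennreal[OF assms(2)], rule ballI)
    fix v assume "v \<in> V"
    with assms(1,3) that show "0 \<le> ?r q v"
      by (intro en_inflow_nonneg[OF assms(2)]) auto
  qed
  have GF: "?G (?F x) = x" if "x \<in> ?CS" for x
    using that unfolding clearing_sections_iff[OF assms] by (rule sym)
  have FG_EN: "?F (?G q) = q" if "q \<in> ?EN" for q
  proof -
    from that have nonneg: "\<forall>v\<in>V. 0 \<le> q v"
      and fixed: "q = (\<lambda>v\<in>V. min (?r q v) (lbar E s l v))"
      unfolding EN_clearing_vectors_iff by blast+
    show ?thesis
      by (rule trans[OF FG[OF nonneg] fixed[symmetric]])
  qed
  show ?thesis
  proof (rule bij_betw_byWitness[where f' = ?G])
    show "\<forall>x\<in>?CS. ?G (?F x) = x"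
      using GF by blast
    show "\<forall>q\<in>?EN. ?F (?G q) = q"
      using FG_EN by blast
    show "?F ` ?CS \<subseteq> ?EN"
    proof clarify
      fix x assume "x \<in> ?CS"
      have nonneg: "\<forall>v\<in>V. 0 \<le> ?F x v"
        by (simp add: payment_vector_nonneg)
      have "?F x = ?F (?G (?F x))"
        by (simp only: GF[OF \<open>x \<in> ?CS\<close>])
      also have "\<dots> = (\<lambda>v\<in>V. min (?r (?F x) v) (lbar E s l v))"
        by (rule FG[OF nonneg])
      finally have "?F x = (\<lambda>v\<in>V. min (?r (?F x) v) (lbar E s l v))" .
      with nonneg show "?F x \<in> ?EN"
        unfolding EN_clearing_vectors_iff by blast
    qed
    show "?G ` ?EN \<subseteq> ?CS"
    proof clarify
      fix q assume "q \<in> ?EN"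
      show "?G q \<in> ?CS"
        unfolding clearing_sections_iff[OF assms] FG_EN[OF \<open>q \<in> ?EN\<close>] ..
    qed
  qed
qed

theorem corollary2:
  fixes n :: nat and E :: "'e set" and s t :: "'e \<Rightarrow> nat"
    and l :: "'e \<Rightarrow> real" and \<iota> :: "nat \<Rightarrow> real"
  assumes "finite E"
    and "\<forall>e\<in>E. s e \<in> {1..n} \<and> t e \<in> {1..n}"
    and "\<forall>e\<in>E. 0 \<le> l e"
    and "\<forall>v\<in>{1..n}. 0 \<le> \<iota> v"
  shows "bij_betw (\<lambda>x. \<lambda>v\<in>{1..n}. enn2real (min (x v) (ennreal (lbar E s l v))))
           (clearing_sections {1..n} E s t l \<iota>)
           (EN_clearing_vectors {1..n} E s t l \<iota>)"
proof -
  have "\<forall>e\<in>E. s e \<in> {1..n}"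
    using assms(2) by blast
  from clearing_sections_bij_EN_clearing_vectors[OF this assms(3,4)] show ?thesis
    unfolding payment_vector_def .
qed

end
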